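(* Let $D$ be a series-parallel digraph with source $s$, sink $t$ and travel times $\tau\ge0$, let $\boldsymbol{P}^*$ be an optimal path profile for \textsc{Min-Max Disjoint Paths} on $D$ with $k$ paths, and let $\boldsymbol{P}$ be a path profile of $k$ pairwise arc-disjoint $s$-$t$-paths in $D$ that is consistent with $\boldsymbol{P}^*$ and balanced in $D$. Then $C_{\max}(\boldsymbol{P},D)\le H_k\cdot C_{\max}(\boldsymbol{P}^*,D)$.
   Context: $H_k=\sum_{j=1}^k\frac1j$. For a path profile (tuple of pairwise arc-disjoint $s$-$t$-paths) $\boldsymbol{P}$: $\tau(P)=\sum_{a\in P}\tau_a$, $C_{\max}(\boldsymbol{P},D)=\max_{P\in\boldsymbol{P}}\tau(P)$, $\theta(\boldsymbol{P},D)=\sum_{P\in\boldsymbol{P}}\tau(P)$. $\boldsymbol{P}$ is consistent with $\boldsymbol{P}^*$ in $D$ if it has the same number $k$ of paths and $\theta(\boldsymbol{P},D)\le\theta(\boldsymbol{P}^*,D)$. If the path lengths of $\boldsymbol{P}$ are $p_1\ge\dots\ge p_k$, then $\boldsymbol{P}$ is balanced in $D$ if $\frac1i\sum_{j=1}^ip_j-p_{i+1}\le C_{\max}(\boldsymbol{P}^*,D)$ for all $i\in[k-1]$. *)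

theory Defs
  imports "HOL-Analysis.Analysis"
begin

text \<open>A digraph (possibly with parallel arcs) is given by a set of arcs E together with
  functions tl_of and hd_of giving the tail and head of every arc.\<close>

definition verts :: "('e \<Rightarrow> 'v) \<Rightarrow> ('e \<Rightarrow> 'v) \<Rightarrow> 'e set \<Rightarrow> 'v set" where
  "verts tl_of hd_of E = tl_of ` E \<union> hd_of ` E"

inductive series_parallel :: "('e \<Rightarrow> 'v) \<Rightarrow> ('e \<Rightarrow> 'v) \<Rightarrow> 'e set \<Rightarrow> 'v \<Rightarrow> 'v \<Rightarrow> bool"
  for tl_of hd_of where
  sp_arc: "\<lbrakk>tl_of e = s; hd_of e = t; s \<noteq> t\<rbrakk> \<Longrightarrow> series_parallel tl_of hd_of {e} s t"
| sp_series: "\<lbrakk>series_parallel tl_of hd_of E1 s u; series_parallel tl_of hd_of E2 u t;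
     E1 \<inter> E2 = {}; verts tl_of hd_of E1 \<inter> verts tl_of hd_of E2 = {u}\<rbrakk>
     \<Longrightarrow> series_parallel tl_of hd_of (E1 \<union> E2) s t"
| sp_parallel: "\<lbrakk>series_parallel tl_of hd_of E1 s t; series_parallel tl_of hd_of E2 s t;
     E1 \<inter> E2 = {}; verts tl_of hd_of E1 \<inter> verts tl_of hd_of E2 = {s, t}\<rbrakk>
     \<Longrightarrow> series_parallel tl_of hd_of (E1 \<union> E2) s t"

definition is_path :: "('e \<Rightarrow> 'v) \<Rightarrow> ('e \<Rightarrow> 'v) \<Rightarrow> 'e set \<Rightarrow> 'v \<Rightarrow> 'v \<Rightarrow> 'e list \<Rightarrow> bool" where
  "is_path tl_of hd_of E s t P \<longleftrightarrow>
     P \<noteq> [] \<and> set P \<subseteq> E \<and> tl_of (hd P) = s \<and> hd_of (last P) = t \<and>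
     (\<forall>i. Suc i < length P \<longrightarrow> hd_of (P ! i) = tl_of (P ! Suc i)) \<and>
     distinct (map tl_of P @ [t])"

definition path_profile :: "('e \<Rightarrow> 'v) \<Rightarrow> ('e \<Rightarrow> 'v) \<Rightarrow> 'e set \<Rightarrow> 'v \<Rightarrow> 'v \<Rightarrow> 'e list list \<Rightarrow> bool" where
  "path_profile tl_of hd_of E s t Ps \<longleftrightarrow>
     (\<forall>P\<in>set Ps. is_path tl_of hd_of E s t P) \<and>
     (\<forall>i j. i < length Ps \<and> j < length Ps \<and> i \<noteq> j \<longrightarrow> set (Ps ! i) \<inter> set (Ps ! j) = {})"

definition path_len :: "('e \<Rightarrow> real) \<Rightarrow> 'e list \<Rightarrow> real" where
  "path_len \<tau> P = (\<Sum>a\<leftarrow>P. \<tau> a)"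

definition Cmax :: "('e \<Rightarrow> real) \<Rightarrow> 'e list list \<Rightarrow> real" where
  "Cmax \<tau> Ps = (if Ps = [] then 0 else Max (set (map (path_len \<tau>) Ps)))"

definition theta :: "('e \<Rightarrow> real) \<Rightarrow> 'e list list \<Rightarrow> real" where
  "theta \<tau> Ps = (\<Sum>P\<leftarrow>Ps. path_len \<tau> P)"

definition minmax_optimal :: "('e \<Rightarrow> 'v) \<Rightarrow> ('e \<Rightarrow> 'v) \<Rightarrow> 'e set \<Rightarrow> 'v \<Rightarrow> 'v \<Rightarrow> ('e \<Rightarrow> real)
     \<Rightarrow> nat \<Rightarrow> 'e list list \<Rightarrow> bool" where
  "minmax_optimal tl_of hd_of E s t \<tau> k Ps \<longleftrightarrow>
     path_profile tl_of hd_of E s t Ps \<and> length Ps = k \<and>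
     (\<forall>Qs. path_profile tl_of hd_of E s t Qs \<and> length Qs = k \<longrightarrow> Cmax \<tau> Ps \<le> Cmax \<tau> Qs)"

definition consistent :: "('e \<Rightarrow> real) \<Rightarrow> 'e list list \<Rightarrow> 'e list list \<Rightarrow> bool" where
  "consistent \<tau> Ps Pstar \<longleftrightarrow> length Ps = length Pstar \<and> theta \<tau> Ps \<le> theta \<tau> Pstar"

text \<open>Path lengths sorted non-increasingly: p ! 0 \<ge> p ! 1 \<ge> ... (0-based indexing).\<close>
definition sorted_lens :: "('e \<Rightarrow> real) \<Rightarrow> 'e list list \<Rightarrow> real list" where
  "sorted_lens \<tau> Ps = rev (sort (map (path_len \<tau>) Ps))"

text \<open>Balanced: for all i in [k-1] (1-based), (1/i) sum_{j<=i} p_j - p_{i+1} \<le> Cmax(P*).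
  In 0-based indexing, p_{i+1} is p ! i and sum_{j<=i} p_j is sum over indices < i.\<close>
definition balanced :: "('e \<Rightarrow> real) \<Rightarrow> 'e list list \<Rightarrow> 'e list list \<Rightarrow> bool" where
  "balanced \<tau> Ps Pstar \<longleftrightarrow>
     (let p = sorted_lens \<tau> Ps in
      \<forall>i\<in>{1..<length Ps}. (\<Sum>j<i. p ! j) / real i - p ! i \<le> Cmax \<tau> Pstar)"

end

theory Submission
  imports Defs
begin

text \<open>Let \<open>S\<^sub>i\<close> be the total length of the \<open>i\<close> longest paths of \<open>P\<close> and \<open>C = C\<^sub>m\<^sub>a\<^sub>x(P\<^sup>*)\<close>.
  Balancedness says \<open>p\<^sub>i\<^sub>+\<^sub>1 \<ge> S\<^sub>i / i - C\<close>, hence \<open>S\<^sub>i\<^sub>+\<^sub>1 / (i+1) \<ge> S\<^sub>i / i - C / (i+1)\<close>, and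
  telescoping from \<open>S\<^sub>1 = p\<^sub>1 = C\<^sub>m\<^sub>a\<^sub>x(P)\<close> gives \<open>C\<^sub>m\<^sub>a\<^sub>x(P) - S\<^sub>k / k \<le> (H\<^sub>k - 1) C\<close>. Consistency
  bounds the average: \<open>S\<^sub>k = \<theta>(P) \<le> \<theta>(P\<^sup>*) \<le> k C\<close>. Only the number of paths of \<open>P\<^sup>*\<close> and
  the bound \<open>C\<close> on their lengths enter.\<close>

lemma first_minus_average_le_harm:
  fixes p :: "nat \<Rightarrow> real"
  assumes balanced: "\<And>i. 1 \<le> i \<Longrightarrow> i < k \<Longrightarrow> (\<Sum>j<i. p j) / real i - p i \<le> C"
    and "1 \<le> i" "i \<le> k"
  shows "p 0 - (\<Sum>j<i. p j) / real i \<le> C * (harm i - 1)"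
  using \<open>1 \<le> i\<close> \<open>i \<le> k\<close>
proof (induction i rule: dec_induct)
  case base
  then show ?case by (simp add: harm_def)
next
  case (step n)
  have "n > 0" using step.hyps by simp
  have "(\<Sum>j<n. p j) / real n - p n \<le> C"
    using balanced step.hyps step.prems by simp
  then have p_n: "(\<Sum>j<n. p j) / real n - C \<le> p n"
    by simp
  have "(\<Sum>j<n. p j) / real n - C / real (Suc n)
      = ((\<Sum>j<n. p j) + ((\<Sum>j<n. p j) / real n - C)) / real (Suc n)"
    using \<open>n > 0\<close> by (simp add: field_simps)
  also have "\<dots> \<le> (\<Sum>j<Suc n. p j) / real (Suc n)"
    using p_n by (simp add: divide_right_mono)
  finally have "p 0 - (\<Sum>j<Suc n. p j) / real (Suc n)
      \<le> p 0 - (\<Sum>j<n. p j) / real n + C / real (Suc n)"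
    by linarith
  also have "\<dots> \<le> C * (harm n - 1) + C / real (Suc n)"
    using step.IH step.prems by simp
  also have "\<dots> = C * (harm (Suc n) - 1)"
    by (simp add: harm_Suc field_simps)
  finally show ?case .
qed

lemma first_le_harm_mult:
  fixes p :: "nat \<Rightarrow> real"
  assumes balanced: "\<And>i. 1 \<le> i \<Longrightarrow> i < k \<Longrightarrow> (\<Sum>j<i. p j) / real i - p i \<le> C"
    and total: "(\<Sum>j<k. p j) \<le> real k * C"
    and "k > 0"
  shows "p 0 \<le> harm k * C"
proof -
  have "p 0 - (\<Sum>j<k. p j) / real k \<le> C * (harm k - 1)"
    using first_minus_average_le_harm[OF balanced] \<open>k > 0\<close> by simp
  moreover have "(\<Sum>j<k. p j) / real k \<le> C"
    using total \<open>k > 0\<close> by (simp add: divide_le_eq mult.commute)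
  ultimately show ?thesis
    by (simp add: algebra_simps)
qed

lemma length_sorted_lens [simp]: "length (sorted_lens \<tau> Ps) = length Ps"
  by (simp add: sorted_lens_def)

lemma sum_list_sorted_lens: "sum_list (sorted_lens \<tau> Ps) = theta \<tau> Ps"
  by (simp add: sorted_lens_def theta_def flip: sum_mset_sum_list)

lemma Cmax_eq_sorted_lens_first:
  assumes "Ps \<noteq> []"
  shows "Cmax \<tau> Ps = sorted_lens \<tau> Ps ! 0"
proof -
  let ?p = "sorted_lens \<tau> Ps"
  have "sorted (rev ?p)"
    by (simp add: sorted_lens_def)
  then have "\<forall>x\<in>set ?p. x \<le> ?p ! 0"
    by (metis in_set_conv_nth le0 sorted_rev_nth_mono)
  moreover have "?p ! 0 \<in> set ?p"
    using assms by simp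
  moreover have "set ?p = set (map (path_len \<tau>) Ps)"
    by (simp add: sorted_lens_def)
  ultimately show ?thesis
    using assms unfolding Cmax_def by (intro if_not_P[THEN trans] Max_eqI) auto
qed

lemma theta_le_length_mult_Cmax: "theta \<tau> Ps \<le> real (length Ps) * Cmax \<tau> Ps"
proof -
  have "theta \<tau> Ps \<le> (\<Sum>Q\<leftarrow>Ps. Cmax \<tau> Ps)"
    unfolding theta_def by (rule sum_list_mono) (auto simp: Cmax_def intro: Max_ge)
  then show ?thesis
    by (simp add: sum_list_triv)
qed

theorem lemma8:
  fixes tl_of hd_of :: "'e \<Rightarrow> 'v" and E :: "'e set" and s t :: 'v
    and \<tau> :: "'e \<Rightarrow> real" and k :: nat and P Pstar :: "'e list list"
  assumes "finite E"
    and "series_parallel tl_of hd_of E s t"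
    and "\<forall>a\<in>E. \<tau> a \<ge> 0"
    and "minmax_optimal tl_of hd_of E s t \<tau> k Pstar"
    and "path_profile tl_of hd_of E s t P"
    and "length P = k"
    and "consistent \<tau> P Pstar"
    and "balanced \<tau> P Pstar"
  shows "Cmax \<tau> P \<le> harm k * Cmax \<tau> Pstar"
proof (cases "k = 0")
  case True
  then show ?thesis using \<open>length P = k\<close> by (simp add: Cmax_def harm_def)
next
  case False
  define p where "p = sorted_lens \<tau> P"
  have "length Pstar = k"
    using \<open>minmax_optimal tl_of hd_of E s t \<tau> k Pstar\<close> by (simp add: minmax_optimal_def)
  have "(\<Sum>j<k. p ! j) = sum_list p"
    using \<open>length P = k\<close> by (simp add: p_def sum_list_sum_nth lessThan_atLeast0)
  also have "\<dots> = theta \<tau> P"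
    by (simp add: p_def sum_list_sorted_lens)
  also have "\<dots> \<le> theta \<tau> Pstar"
    using \<open>consistent \<tau> P Pstar\<close> by (simp add: consistent_def)
  also have "\<dots> \<le> real k * Cmax \<tau> Pstar"
    using theta_le_length_mult_Cmax \<open>length Pstar = k\<close> by metis
  finally have "p ! 0 \<le> harm k * Cmax \<tau> Pstar"
    using \<open>balanced \<tau> P Pstar\<close> \<open>length P = k\<close> False
    by (intro first_le_harm_mult[where p = "(!) p"]) (auto simp: balanced_def Let_def p_def)
  then show ?thesis
    using Cmax_eq_sorted_lens_first \<open>length P = k\<close> False by (fastforce simp: p_def)
qed

end
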